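(* Let $V\in C^\infty(\mathbb{R}^n)$ with $\alpha_0>-\infty$, let $a\in\mathbb{R}$ satisfy $a+\alpha_0>\frac{\nu^2}4$, and let $P(x):=\begin{pmatrix}2I&\nu I\\\nu I&2\frac{\partial^2V}{\partial x^2}(x)+2aI\end{pmatrix}$. Then for all $x\in\mathbb{R}^n$ $$c_1P(x)\le\begin{pmatrix}I&0\\0&\frac{\partial^2V}{\partial x^2}(x)+(1-\alpha_0)I\end{pmatrix}\le c_2P(x),$$ with $c_1:=\dfrac{1}{a+\alpha_0+1+\sqrt{(a+\alpha_0-1)^2+\nu^2}}>0$ and $c_2:=\dfrac{a+\alpha_0+1+\sqrt{(a+\alpha_0-1)^2+\nu^2}}{4(a+\alpha_0)-\nu^2}>0$.
   Context: $\nu>0$ is a constant and $I$ the $n\times n$ identity. $\alpha(x)$ is the smallest eigenvalue of $\frac{\partial^2V}{\partial x^2}(x)$ and $\alpha_0:=\inf_{x\in\mathbb{R}^n}\alpha(x)$. For symmetric matrices, $A\ge B$ means $A-B$ is positive semi-definite. *)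

theory Defs
  imports "HOL-Analysis.Analysis"
begin

definition partial :: "'n::finite \<Rightarrow> (real^'n \<Rightarrow> real) \<Rightarrow> real^'n \<Rightarrow> real" where
  "partial i f x = deriv (\<lambda>t. f (x + t *\<^sub>R axis i 1)) 0"

fun iter_partial :: "'n::finite list \<Rightarrow> (real^'n \<Rightarrow> real) \<Rightarrow> real^'n \<Rightarrow> real" where
  "iter_partial [] f = f"
| "iter_partial (i # is) f = partial i (iter_partial is f)"

definition smooth :: "(real^'n::finite \<Rightarrow> real) \<Rightarrow> bool" where
  "smooth f \<longleftrightarrow> (\<forall>is x. iter_partial is f differentiable (at x))"

definition hessian :: "(real^'n::finite \<Rightarrow> real) \<Rightarrow> real^'n \<Rightarrow> real^'n^'n" where
  "hessian f x = (\<chi> i j. iter_partial [i, j] f x)"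

definition is_eigenvalue :: "real^'n::finite^'n \<Rightarrow> real \<Rightarrow> bool" where
  "is_eigenvalue A l \<longleftrightarrow> (\<exists>v. v \<noteq> 0 \<and> A *v v = l *\<^sub>R v)"

definition min_eigenvalue :: "real^'n::finite^'n \<Rightarrow> real" where
  "min_eigenvalue A = Inf {l. is_eigenvalue A l}"

definition psd :: "real^'m::finite^'m \<Rightarrow> bool" where
  "psd M \<longleftrightarrow> (\<forall>z. 0 \<le> z \<bullet> (M *v z))"

definition loewner_le :: "real^'m::finite^'m \<Rightarrow> real^'m^'m \<Rightarrow> bool" where
  "loewner_le A B \<longleftrightarrow> psd (B - A)"

text \<open>2x2 block matrix [[A, B], [C, D]] indexed by 'n + 'n (first block = Inl).\<close>
definition block2 :: "real^'n::finite^'n \<Rightarrow> real^'n^'n \<Rightarrow> real^'n^'n \<Rightarrow> real^'n^'n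
    \<Rightarrow> real^('n + 'n)^('n + 'n)" where
  "block2 A B C D = (\<chi> p q. case (p, q) of
      (Inl i, Inl j) \<Rightarrow> A $ i $ j | (Inl i, Inr j) \<Rightarrow> B $ i $ j
    | (Inr i, Inl j) \<Rightarrow> C $ i $ j | (Inr i, Inr j) \<Rightarrow> D $ i $ j)"

end

theory Submission
  imports Defs
begin

text \<open>
  By Schwarz's theorem the Hessian \<open>H\<close> of the smooth \<open>V\<close> is symmetric, so its least eigenvalue
  bounds its Rayleigh quotient from below and \<open>H \<ge> \<alpha>\<^sub>0 I\<close>. For every \<open>c\<close>, both \<open>M - c P\<close> and
  \<open>c P - M\<close> (\<open>M\<close> the middle matrix) have the form \<open>[[p I, s I], [s I, k H + l I]]\<close>, where
  \<open>k = \<plusminus>(1 - 2c)\<close>; when \<open>k \<ge> 0\<close>, replacing \<open>H\<close> by \<open>\<alpha>\<^sub>0 I\<close> reduces their semidefiniteness to that of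
  \<open>\<plusminus>[[1 - 2c, -c\<nu>], [-c\<nu>, 1 - 2cb]]\<close> with \<open>b = a + \<alpha>\<^sub>0\<close>. For \<open>c = 1/t\<close> the determinant
  vanishes iff \<open>(t - 2) (t - 2b) = \<nu>\<^sup>2\<close>, i.e. \<open>t = b + 1 \<plusminus> \<surd>((b - 1)\<^sup>2 + \<nu>\<^sup>2)\<close>. The
  larger root exceeds \<open>2\<close> and \<open>2b\<close> and gives \<open>c\<^sub>1\<close>; the smaller one lies below both
  and is positive because \<open>4b > \<nu>\<^sup>2\<close>, and it gives \<open>c\<^sub>2\<close>.
\<close>

section \<open>Symmetry of second partial derivatives\<close>

lemma has_real_derivative_along_line:
  fixes f :: "'a::real_normed_vector \<Rightarrow> real"
  assumes "(f has_derivative f') (at (y + s *\<^sub>R v))"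
  shows "((\<lambda>s. f (y + s *\<^sub>R v)) has_real_derivative f' v) (at s)"
proof -
  have "((\<lambda>s. f (y + s *\<^sub>R v)) has_derivative (\<lambda>h. f' (h *\<^sub>R v))) (at s)"
    using assms
    by (auto intro!: derivative_eq_intros has_derivative_compose[of "\<lambda>s. y + s *\<^sub>R v" _ _ _ f])
  moreover have "(\<lambda>h. f' (h *\<^sub>R v)) = (*) (f' v)"
    using linear.scaleR[OF has_derivative_linear[OF assms]] by (simp add: fun_eq_iff)
  ultimately show ?thesis
    unfolding has_field_derivative_def by simp
qed

lemma partial_eq_frechet_derivative:
  assumes "(f has_derivative f') (at x)"
  shows "partial i f x = f' (axis i 1)"
  unfolding partial_def
  by (rule DERIV_imp_deriv, rule has_real_derivative_along_line) (use assms in simp)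

lemma has_real_derivative_partial_along_axis:
  assumes "f differentiable (at (x + s *\<^sub>R axis i 1))"
  shows "((\<lambda>s. f (x + s *\<^sub>R axis i 1)) has_real_derivative partial i f (x + s *\<^sub>R axis i 1))
           (at s)"
proof -
  obtain f' where "(f has_derivative f') (at (x + s *\<^sub>R axis i 1))"
    using assms unfolding differentiable_def by blast
  then show ?thesis
    using has_real_derivative_along_line partial_eq_frechet_derivative by metis
qed

definition second_difference ::
    "(real^'n::finite \<Rightarrow> real) \<Rightarrow> 'n \<Rightarrow> 'n \<Rightarrow> real^'n \<Rightarrow> real \<Rightarrow> real" where
  "second_difference f i j x h =
     f (x + h *\<^sub>R axis i 1 + h *\<^sub>R axis j 1) - f (x + h *\<^sub>R axis i 1) - f (x + h *\<^sub>R axis j 1) + f x"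

lemma second_difference_commute: "second_difference f i j x h = second_difference f j i x h"
  unfolding second_difference_def by (simp add: algebra_simps)

lemma second_difference_eq_mixed_partial:
  fixes f :: "real^'n::finite \<Rightarrow> real"
  assumes f_diff: "\<And>y. f differentiable (at y)"
    and fj_diff: "\<And>y. partial j f differentiable (at y)" and "h > 0"
  obtains p where "norm (p - x) \<le> 2 * h"
    and "second_difference f i j x h = h\<^sup>2 * partial i (partial j f) p"
proof -
  let ?ei = "axis i 1 :: real^'n" and ?ej = "axis j 1 :: real^'n"
  define \<phi> where "\<phi> = (\<lambda>t. f (x + h *\<^sub>R ?ei + t *\<^sub>R ?ej) - f (x + t *\<^sub>R ?ej))"
  have "\<exists>\<sigma>>0. \<sigma> < h \<and> \<phi> h - \<phi> 0 = (h - 0) *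
      (partial j f (x + h *\<^sub>R ?ei + \<sigma> *\<^sub>R ?ej) - partial j f (x + \<sigma> *\<^sub>R ?ej))"
    using \<open>h > 0\<close> unfolding \<phi>_def
    by (intro MVT2 DERIV_diff has_real_derivative_partial_along_axis f_diff)
  then obtain \<sigma> where \<sigma>: "0 < \<sigma>" "\<sigma> < h" and \<phi>_diff: "\<phi> h - \<phi> 0 =
      h * (partial j f (x + \<sigma> *\<^sub>R ?ej + h *\<^sub>R ?ei) - partial j f (x + \<sigma> *\<^sub>R ?ej))"
    by (auto simp: add_ac)
  have "\<exists>\<tau>>0. \<tau> < h \<and>
      partial j f (x + \<sigma> *\<^sub>R ?ej + h *\<^sub>R ?ei) - partial j f (x + \<sigma> *\<^sub>R ?ej + 0 *\<^sub>R ?ei)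
        = (h - 0) * partial i (partial j f) (x + \<sigma> *\<^sub>R ?ej + \<tau> *\<^sub>R ?ei)"
    using \<open>h > 0\<close>
    by (intro MVT2[where f = "\<lambda>s. partial j f (x + \<sigma> *\<^sub>R ?ej + s *\<^sub>R ?ei)"]
        has_real_derivative_partial_along_axis fj_diff)
  then obtain \<tau> where \<tau>: "0 < \<tau>" "\<tau> < h" and partial_diff:
    "partial j f (x + \<sigma> *\<^sub>R ?ej + h *\<^sub>R ?ei) - partial j f (x + \<sigma> *\<^sub>R ?ej)
      = h * partial i (partial j f) (x + \<sigma> *\<^sub>R ?ej + \<tau> *\<^sub>R ?ei)"
    by auto
  show ?thesis
  proof
    have "norm (\<sigma> *\<^sub>R ?ej + \<tau> *\<^sub>R ?ei) \<le> 2 * h"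
      using norm_triangle_ineq[of "\<sigma> *\<^sub>R ?ej" "\<tau> *\<^sub>R ?ei"] \<sigma> \<tau> by simp
    then show "norm (x + \<sigma> *\<^sub>R ?ej + \<tau> *\<^sub>R ?ei - x) \<le> 2 * h"
      by (simp add: algebra_simps)
    have "second_difference f i j x h = \<phi> h - \<phi> 0"
      by (simp add: second_difference_def \<phi>_def)
    then show "second_difference f i j x h
        = h\<^sup>2 * partial i (partial j f) (x + \<sigma> *\<^sub>R ?ej + \<tau> *\<^sub>R ?ei)"
      by (simp add: \<phi>_diff partial_diff power2_eq_square)
  qed
qed

lemma second_difference_quotient_tendsto:
  assumes "\<And>y. f differentiable (at y)" and "\<And>y. partial j f differentiable (at y)"
    and cont: "continuous (at x) (partial i (partial j f))"
  shows "((\<lambda>h. second_difference f i j x h / h\<^sup>2) \<longlongrightarrow> partial i (partial j f) x) (at_right 0)"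
proof (rule tendstoI)
  fix e :: real
  assume "e > 0"
  then obtain d where "d > 0"
    and d: "\<And>y. dist y x < d \<Longrightarrow> dist (partial i (partial j f) y) (partial i (partial j f) x) < e"
    using cont unfolding continuous_at_eps_delta by blast
  have "dist (second_difference f i j x h / h\<^sup>2) (partial i (partial j f) x) < e"
    if "0 < h" and "h < d / 2" for h
  proof -
    obtain p where "norm (p - x) \<le> 2 * h"
      and "second_difference f i j x h = h\<^sup>2 * partial i (partial j f) p"
      using second_difference_eq_mixed_partial assms(1,2) \<open>0 < h\<close> by metis
    with that d[of p] show ?thesis by (simp add: dist_norm)
  qed
  then show "\<forall>\<^sub>F h in at_right 0.
      dist (second_difference f i j x h / h\<^sup>2) (partial i (partial j f) x) < e"
    unfolding eventually_at_right_field using \<open>d > 0\<close> by (intro exI[of _ "d / 2"]) auto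
qed

lemma partial_partial_commute:
  assumes "\<And>y. f differentiable (at y)"
    and "\<And>y. partial i f differentiable (at y)" and "\<And>y. partial j f differentiable (at y)"
    and "continuous (at x) (partial i (partial j f))"
    and "continuous (at x) (partial j (partial i f))"
  shows "partial i (partial j f) x = partial j (partial i f) x"
proof (rule tendsto_unique[OF trivial_limit_at_right_real])
  show "((\<lambda>h. second_difference f i j x h / h\<^sup>2) \<longlongrightarrow> partial i (partial j f) x) (at_right 0)"
    using assms by (intro second_difference_quotient_tendsto)
  show "((\<lambda>h. second_difference f i j x h / h\<^sup>2) \<longlongrightarrow> partial j (partial i f) x) (at_right 0)"
    unfolding second_difference_commute[of f i j] using assms
    by (intro second_difference_quotient_tendsto)
qed

lemma hessian_symmetric:
  assumes "smooth f"
  shows "transpose (hessian f x) = hessian f x"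
proof -
  have diff: "\<And>is y. iter_partial is f differentiable (at y)"
    using assms unfolding smooth_def by blast
  have f_diff: "\<And>y. f differentiable (at y)"
    using diff[of "[]"] by simp
  have partial_diff: "\<And>k y. partial k f differentiable (at y)"
    using diff[of "[_]"] by simp
  have partial2_cont: "\<And>k l. continuous (at x) (partial k (partial l f))"
    using diff[of "[_, _]"] by (simp add: differentiable_imp_continuous_within)
  have "partial i (partial j f) x = partial j (partial i f) x" for i j
    by (intro partial_partial_commute f_diff partial_diff partial2_cont)
  then show ?thesis
    by (simp add: hessian_def transpose_def vec_eq_iff)
qed

section \<open>The least eigenvalue of a symmetric matrix\<close>

lemma inner_matrix_vector_symmetric:
  fixes M :: "real^'n::finite^'n"
  assumes "transpose M = M"
  shows "x \<bullet> (M *v y) = y \<bullet> (M *v x)"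
  by (metis assms dot_lmul_matrix transpose_matrix_vector inner_commute)

lemma linear_coeff_eq_0_if_quadratic_nonneg:
  fixes b c :: real
  assumes "c \<ge> 0" and "\<And>t. 0 \<le> 2 * t * b + t\<^sup>2 * c"
  shows "b = 0"
proof (rule ccontr)
  assume "b \<noteq> 0"
  define t where "t = - b / (c + 1)"
  have ct: "(c + 1) * t = - b" using assms(1) by (simp add: t_def)
  have "0 \<le> (2 * t * b + t\<^sup>2 * c) * (c + 1)\<^sup>2" using assms by simp
  also have "\<dots> = 2 * b * (c + 1) * ((c + 1) * t) + c * ((c + 1) * t)\<^sup>2"
    by (simp add: algebra_simps power2_eq_square)
  also have "\<dots> = - b\<^sup>2 * (c + 2)" unfolding ct by (simp add: algebra_simps power2_eq_square)
  also have "\<dots> < 0" using \<open>b \<noteq> 0\<close> assms(1) by (simp add: mult_pos_neg)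
  finally show False by simp
qed

lemma psd_quadratic_form_eq_0_imp_kernel:
  fixes A :: "real^'n::finite^'n"
  assumes sym: "transpose A = A" and "psd A" and v: "v \<bullet> (A *v v) = 0"
  shows "A *v v = 0"
proof -
  have "w \<bullet> (A *v v) = 0" for w
  proof (rule linear_coeff_eq_0_if_quadratic_nonneg)
    show "0 \<le> w \<bullet> (A *v w)" using \<open>psd A\<close> unfolding psd_def by blast
    fix t
    have "(v + t *\<^sub>R w) \<bullet> (A *v (v + t *\<^sub>R w))
        = v \<bullet> (A *v v) + t * (v \<bullet> (A *v w)) + t * (w \<bullet> (A *v v)) + t\<^sup>2 * (w \<bullet> (A *v w))"
      by (simp add: matrix_vector_right_distrib matrix_vector_mult_scaleR inner_add_left
          inner_add_right power2_eq_square algebra_simps)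
    also have "\<dots> = 2 * t * (w \<bullet> (A *v v)) + t\<^sup>2 * (w \<bullet> (A *v w))"
      using v inner_matrix_vector_symmetric[OF sym, of v w] by simp
    finally show "0 \<le> 2 * t * (w \<bullet> (A *v v)) + t\<^sup>2 * (w \<bullet> (A *v w))"
      using \<open>psd A\<close> unfolding psd_def by metis
  qed
  from this[of "A *v v"] show ?thesis by simp
qed

lemma symmetric_matrix_least_eigenvalue:
  fixes H :: "real^'n::finite^'n"
  assumes sym: "transpose H = H"
  obtains \<mu> where "is_eigenvalue H \<mu>" and "\<And>z. \<mu> * (z \<bullet> z) \<le> z \<bullet> (H *v z)"
proof -
  define q where "q = (\<lambda>z. z \<bullet> (H *v z))"
  have "continuous_on (sphere 0 1) q"
    unfolding q_def
    by (intro continuous_intros linear_continuous_on matrix_vector_mul_bounded_linear)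
  then obtain v where v: "norm v = 1" and v_min: "\<And>y. norm y = 1 \<Longrightarrow> q v \<le> q y"
    using continuous_attains_inf[of "sphere 0 1" q] norm_axis_1 by fastforce
  define \<mu> where "\<mu> = q v"
  have lower: "\<mu> * (y \<bullet> y) \<le> q y" for y
  proof (cases "y = 0")
    case False
    have "\<mu> \<le> q (inverse (norm y) *\<^sub>R y)"
      using v_min False unfolding \<mu>_def by simp
    also have "\<dots> = q y / (norm y)\<^sup>2"
      by (simp add: q_def matrix_vector_mult_scaleR power2_eq_square divide_inverse)
    finally show ?thesis
      using False by (simp add: field_simps power2_norm_eq_inner)
  qed (simp add: q_def)
  define A where "A = H - \<mu> *\<^sub>R mat 1"
  have qA: "y \<bullet> (A *v y) = q y - \<mu> * (y \<bullet> y)" for y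
    by (simp add: A_def q_def matrix_vector_mult_diff_rdistrib inner_diff_right
        scaleR_matrix_vector_assoc[symmetric])
  have "A *v v = 0"
  proof (rule psd_quadratic_form_eq_0_imp_kernel)
    show "transpose A = A"
      using sym unfolding A_def transpose_def by (simp add: vec_eq_iff mat_def)
    show "psd A" unfolding psd_def using qA lower by simp
    show "v \<bullet> (A *v v) = 0" using qA v by (simp add: \<mu>_def norm_eq_1)
  qed
  then have "H *v v = \<mu> *\<^sub>R v"
    by (simp add: A_def matrix_vector_mult_diff_rdistrib scaleR_matrix_vector_assoc[symmetric])
  with v have "is_eigenvalue H \<mu>"
    unfolding is_eigenvalue_def by (metis norm_zero zero_neq_one)
  with lower show ?thesis using that q_def by blast
qed

lemma min_eigenvalue_le_quadratic_form:
  fixes H :: "real^'n::finite^'n"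
  assumes "transpose H = H"
  shows "min_eigenvalue H * (z \<bullet> z) \<le> z \<bullet> (H *v z)"
proof -
  obtain \<mu> where eig: "is_eigenvalue H \<mu>"
    and lower: "\<And>z. \<mu> * (z \<bullet> z) \<le> z \<bullet> (H *v z)"
    using symmetric_matrix_least_eigenvalue[OF assms] by blast
  have "\<mu> \<le> l" if eig_l: "is_eigenvalue H l" for l
  proof -
    obtain u where "u \<noteq> 0" and "H *v u = l *\<^sub>R u"
      using eig_l unfolding is_eigenvalue_def by blast
    with lower[of u] show ?thesis by simp
  qed
  then have "min_eigenvalue H = \<mu>"
    unfolding min_eigenvalue_def using eig by (intro cInf_eq_minimum) auto
  with lower show ?thesis by simp
qed

lemma hessian_quadratic_form_ge_Inf_min_eigenvalue:
  assumes "smooth V" and "bdd_below (range (\<lambda>y. min_eigenvalue (hessian V y)))"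
  shows "(INF y. min_eigenvalue (hessian V y)) * (w \<bullet> w) \<le> w \<bullet> (hessian V x *v w)"
proof -
  have "min_eigenvalue (hessian V x) * (w \<bullet> w) \<le> w \<bullet> (hessian V x *v w)"
    by (intro min_eigenvalue_le_quadratic_form hessian_symmetric \<open>smooth V\<close>)
  moreover have "(INF y. min_eigenvalue (hessian V y)) \<le> min_eigenvalue (hessian V x)"
    by (rule cInf_lower[OF rangeI \<open>bdd_below _\<close>])
  ultimately show ?thesis
    by (meson inner_ge_zero mult_right_mono order_trans)
qed

section \<open>Block matrices\<close>

lemma inner_block2_mult:
  fixes z :: "real^('n::finite + 'n)"
  defines "u \<equiv> \<chi> i. z $ Inl i" and "w \<equiv> \<chi> i. z $ Inr i"
  shows "z \<bullet> (block2 A B C D *v z)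
           = u \<bullet> (A *v u) + u \<bullet> (B *v w) + w \<bullet> (C *v u) + w \<bullet> (D *v w)"
proof -
  have sum_Plus: "(\<Sum>p\<in>UNIV. g p) = (\<Sum>i\<in>UNIV. g (Inl i)) + (\<Sum>j\<in>UNIV. g (Inr j))"
    for g :: "'n + 'n \<Rightarrow> real"
    by (subst UNIV_Plus_UNIV[symmetric], subst sum.Plus) (auto simp: comp_def)
  show ?thesis
    by (simp add: u_def w_def inner_vec_def matrix_vector_mult_def block2_def sum_Plus
        sum_distrib_left sum.distrib algebra_simps)
qed

lemma quadratic_form_inner_nonneg:
  fixes u w :: "'a::real_inner"
  assumes "p \<ge> 0" and "q \<ge> 0" and "s\<^sup>2 \<le> p * q"
  shows "0 \<le> p * (u \<bullet> u) + 2 * s * (u \<bullet> w) + q * (w \<bullet> w)"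
proof -
  have "0 \<le> p * (norm u)\<^sup>2 - 2 * \<bar>s\<bar> * norm u * norm w + q * (norm w)\<^sup>2"
  proof (cases "p = 0")
    case True
    then show ?thesis using assms by simp
  next
    case False
    have "p * (p * (norm u)\<^sup>2 - 2 * \<bar>s\<bar> * norm u * norm w + q * (norm w)\<^sup>2)
        = (p * norm u - \<bar>s\<bar> * norm w)\<^sup>2 + (p * q - s\<^sup>2) * (norm w)\<^sup>2"
      by (simp add: algebra_simps power2_eq_square)
    also have "\<dots> \<ge> 0" using assms by simp
    finally show ?thesis using False assms(1) by (simp add: zero_le_mult_iff)
  qed
  moreover have "\<bar>s * (u \<bullet> w)\<bar> \<le> \<bar>s\<bar> * (norm u * norm w)"
    unfolding abs_mult by (simp add: mult_left_mono Cauchy_Schwarz_ineq2)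
  ultimately show ?thesis
    by (simp add: power2_norm_eq_inner algebra_simps abs_le_iff)
qed

lemma psd_block2_scalar:
  fixes H :: "real^'n::finite^'n"
  assumes H_lower: "\<And>w. \<alpha> * (w \<bullet> w) \<le> w \<bullet> (H *v w)"
    and "p \<ge> 0" and "k \<ge> 0" and "k * \<alpha> + l \<ge> 0" and "s\<^sup>2 \<le> p * (k * \<alpha> + l)"
  shows "psd (block2 (p *\<^sub>R mat 1) (s *\<^sub>R mat 1) (s *\<^sub>R mat 1) (k *\<^sub>R H + l *\<^sub>R mat 1))"
  unfolding psd_def
proof
  fix z :: "real^('n + 'n)"
  define u where "u = (\<chi> i. z $ Inl i)"
  define w where "w = (\<chi> i. z $ Inr i)"
  have "k * (\<alpha> * (w \<bullet> w)) \<le> k * (w \<bullet> (H *v w))"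
    using H_lower \<open>k \<ge> 0\<close> by (rule mult_left_mono)
  moreover have "0 \<le> p * (u \<bullet> u) + 2 * s * (u \<bullet> w) + (k * \<alpha> + l) * (w \<bullet> w)"
    using assms by (intro quadratic_form_inner_nonneg)
  ultimately show
    "0 \<le> z \<bullet> (block2 (p *\<^sub>R mat 1) (s *\<^sub>R mat 1) (s *\<^sub>R mat 1) (k *\<^sub>R H + l *\<^sub>R mat 1) *v z)"
    unfolding inner_block2_mult u_def[symmetric] w_def[symmetric]
    by (simp add: matrix_vector_mult_add_rdistrib scaleR_matrix_vector_assoc[symmetric]
        inner_add_right inner_commute[of w u] algebra_simps)
qed

lemma loewner_le_block2_lower:
  fixes H :: "real^'n::finite^'n"
  assumes H_lower: "\<And>w. \<alpha> * (w \<bullet> w) \<le> w \<bullet> (H *v w)"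
    and "0 \<le> 1 - 2 * c" and "0 \<le> 1 - 2 * c * (a + \<alpha>)"
    and "(c * \<nu>)\<^sup>2 \<le> (1 - 2 * c) * (1 - 2 * c * (a + \<alpha>))"
  shows "loewner_le (c *\<^sub>R block2 (2 *\<^sub>R mat 1) (\<nu> *\<^sub>R mat 1) (\<nu> *\<^sub>R mat 1) (2 *\<^sub>R H + (2 * a) *\<^sub>R mat 1))
           (block2 (mat 1) 0 0 (H + (1 - \<alpha>) *\<^sub>R mat 1))"
proof -
  have "block2 (mat 1) 0 0 (H + (1 - \<alpha>) *\<^sub>R mat 1)
      - c *\<^sub>R block2 (2 *\<^sub>R mat 1) (\<nu> *\<^sub>R mat 1) (\<nu> *\<^sub>R mat 1) (2 *\<^sub>R H + (2 * a) *\<^sub>R mat 1)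
    = block2 ((1 - 2 * c) *\<^sub>R mat 1) ((- c * \<nu>) *\<^sub>R mat 1) ((- c * \<nu>) *\<^sub>R mat 1)
        ((1 - 2 * c) *\<^sub>R H + (1 - \<alpha> - 2 * c * a) *\<^sub>R mat 1)"
    by (simp add: block2_def vec_eq_iff mat_def algebra_simps split: sum.split)
  moreover have "psd \<dots>"
    by (rule psd_block2_scalar[OF H_lower]) (use assms in \<open>simp_all add: algebra_simps\<close>)
  ultimately show ?thesis
    unfolding loewner_le_def by simp
qed

lemma loewner_le_block2_upper:
  fixes H :: "real^'n::finite^'n"
  assumes H_lower: "\<And>w. \<alpha> * (w \<bullet> w) \<le> w \<bullet> (H *v w)"
    and "0 \<le> 2 * c - 1" and "0 \<le> 2 * c * (a + \<alpha>) - 1"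
    and "(c * \<nu>)\<^sup>2 \<le> (2 * c - 1) * (2 * c * (a + \<alpha>) - 1)"
  shows "loewner_le (block2 (mat 1) 0 0 (H + (1 - \<alpha>) *\<^sub>R mat 1))
           (c *\<^sub>R block2 (2 *\<^sub>R mat 1) (\<nu> *\<^sub>R mat 1) (\<nu> *\<^sub>R mat 1) (2 *\<^sub>R H + (2 * a) *\<^sub>R mat 1))"
proof -
  have "c *\<^sub>R block2 (2 *\<^sub>R mat 1) (\<nu> *\<^sub>R mat 1) (\<nu> *\<^sub>R mat 1) (2 *\<^sub>R H + (2 * a) *\<^sub>R mat 1)
      - block2 (mat 1) 0 0 (H + (1 - \<alpha>) *\<^sub>R mat 1)
    = block2 ((2 * c - 1) *\<^sub>R mat 1) ((c * \<nu>) *\<^sub>R mat 1) ((c * \<nu>) *\<^sub>R mat 1)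
        ((2 * c - 1) *\<^sub>R H + (2 * c * a - 1 + \<alpha>) *\<^sub>R mat 1)"
    by (simp add: block2_def vec_eq_iff mat_def algebra_simps split: sum.split)
  moreover have "psd \<dots>"
    by (rule psd_block2_scalar[OF H_lower]) (use assms in \<open>simp_all add: algebra_simps\<close>)
  ultimately show ?thesis
    unfolding loewner_le_def by simp
qed

lemma reciprocal_root_identity:
  fixes t b \<nu> :: real
  assumes "t \<noteq> 0" and "c = 1 / t" and "(t - 2) * (t - 2 * b) = \<nu>\<^sup>2"
  shows "(c * \<nu>)\<^sup>2 = (1 - 2 * c) * (1 - 2 * c * b)"
proof -
  have "(1 - 2 * c) * (1 - 2 * c * b) = (t - 2) * (t - 2 * b) * c\<^sup>2"
    unfolding assms(2) using assms(1) by (simp add: field_simps power2_eq_square)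
  then show ?thesis
    using assms(3) by (simp add: power_mult_distrib)
qed

lemma loewner_constants:
  fixes b \<nu> :: real
  defines "r \<equiv> sqrt ((b - 1)\<^sup>2 + \<nu>\<^sup>2)"
  defines "c\<^sub>1 \<equiv> 1 / (b + 1 + r)" and "c\<^sub>2 \<equiv> (b + 1 + r) / (4 * b - \<nu>\<^sup>2)"
  assumes "4 * b > \<nu>\<^sup>2"
  shows "c\<^sub>1 > 0" and "0 \<le> 1 - 2 * c\<^sub>1" and "0 \<le> 1 - 2 * c\<^sub>1 * b"
      and "(c\<^sub>1 * \<nu>)\<^sup>2 \<le> (1 - 2 * c\<^sub>1) * (1 - 2 * c\<^sub>1 * b)"
    and "c\<^sub>2 > 0" and "0 \<le> 2 * c\<^sub>2 - 1" and "0 \<le> 2 * c\<^sub>2 * b - 1"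
      and "(c\<^sub>2 * \<nu>)\<^sup>2 \<le> (2 * c\<^sub>2 - 1) * (2 * c\<^sub>2 * b - 1)"
proof -
  define L m where "L = b + 1 + r" and "m = b + 1 - r"
  have r2: "r\<^sup>2 = (b - 1)\<^sup>2 + \<nu>\<^sup>2" unfolding r_def by simp
  have r_ge: "\<bar>b - 1\<bar> \<le> r"
    unfolding r_def using real_sqrt_le_mono[of "(b - 1)\<^sup>2" "(b - 1)\<^sup>2 + \<nu>\<^sup>2"] by simp
  have "L * m = 4 * b - \<nu>\<^sup>2"
    unfolding L_def m_def using r2 by (simp add: algebra_simps power2_eq_square)
  moreover have L_ge: "2 \<le> L" "2 * b \<le> L" and m_le: "m \<le> 2" "m \<le> 2 * b"
    using r_ge by (auto simp: L_def m_def abs_le_iff)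
  ultimately have "L > 0" and "m > 0"
    using assms(4) zero_less_mult_pos[of L m] by auto
  have c1: "c\<^sub>1 = 1 / L" and c2: "c\<^sub>2 = 1 / m"
    unfolding c\<^sub>1_def c\<^sub>2_def L_def[symmetric] \<open>L * m = 4 * b - \<nu>\<^sup>2\<close>[symmetric]
    using \<open>L > 0\<close> by simp_all
  have "(L - 2) * (L - 2 * b) = r\<^sup>2 - (b - 1)\<^sup>2"
    and "(m - 2) * (m - 2 * b) = r\<^sup>2 - (b - 1)\<^sup>2"
    unfolding L_def m_def by (simp_all add: algebra_simps power2_eq_square)
  then have L_root: "(L - 2) * (L - 2 * b) = \<nu>\<^sup>2"
    and m_root: "(m - 2) * (m - 2 * b) = \<nu>\<^sup>2"
    using r2 by simp_all
  show "c\<^sub>1 > 0" "c\<^sub>2 > 0"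
    using \<open>L > 0\<close> \<open>m > 0\<close> by (simp_all add: c1 c2)
  have "1 - 2 * c\<^sub>1 = (L - 2) / L" "1 - 2 * c\<^sub>1 * b = (L - 2 * b) / L"
    using \<open>L > 0\<close> by (simp_all add: c1 diff_divide_distrib)
  then show "0 \<le> 1 - 2 * c\<^sub>1" "0 \<le> 1 - 2 * c\<^sub>1 * b"
    using \<open>L > 0\<close> L_ge by simp_all
  have "(c\<^sub>1 * \<nu>)\<^sup>2 = (1 - 2 * c\<^sub>1) * (1 - 2 * c\<^sub>1 * b)"
    using \<open>L > 0\<close> by (intro reciprocal_root_identity[OF _ c1 L_root]) simp
  then show "(c\<^sub>1 * \<nu>)\<^sup>2 \<le> (1 - 2 * c\<^sub>1) * (1 - 2 * c\<^sub>1 * b)"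
    by simp
  have "2 * c\<^sub>2 - 1 = (2 - m) / m" "2 * c\<^sub>2 * b - 1 = (2 * b - m) / m"
    using \<open>m > 0\<close> by (simp_all add: c2 diff_divide_distrib)
  then show "0 \<le> 2 * c\<^sub>2 - 1" "0 \<le> 2 * c\<^sub>2 * b - 1"
    using \<open>m > 0\<close> m_le by simp_all
  have "(c\<^sub>2 * \<nu>)\<^sup>2 = (1 - 2 * c\<^sub>2) * (1 - 2 * c\<^sub>2 * b)"
    using \<open>m > 0\<close> by (intro reciprocal_root_identity[OF _ c2 m_root]) simp
  then show "(c\<^sub>2 * \<nu>)\<^sup>2 \<le> (2 * c\<^sub>2 - 1) * (2 * c\<^sub>2 * b - 1)"
    by (simp add: algebra_simps)
qed

theorem lemma6p1:
  fixes V :: "real^'n \<Rightarrow> real" and \<nu> a :: real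
  defines "\<alpha> \<equiv> (\<lambda>x. min_eigenvalue (hessian V x))"
  defines "\<alpha>\<^sub>0 \<equiv> Inf (range \<alpha>)"
  defines "P \<equiv> (\<lambda>x. block2 (2 *\<^sub>R mat 1) (\<nu> *\<^sub>R mat 1) (\<nu> *\<^sub>R mat 1)
                             (2 *\<^sub>R hessian V x + (2 * a) *\<^sub>R mat 1))"
  defines "c\<^sub>1 \<equiv> 1 / (a + \<alpha>\<^sub>0 + 1 + sqrt ((a + \<alpha>\<^sub>0 - 1)\<^sup>2 + \<nu>\<^sup>2))"
  defines "c\<^sub>2 \<equiv> (a + \<alpha>\<^sub>0 + 1 + sqrt ((a + \<alpha>\<^sub>0 - 1)\<^sup>2 + \<nu>\<^sup>2)) / (4 * (a + \<alpha>\<^sub>0) - \<nu>\<^sup>2)"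
  assumes "\<nu> > 0"
    and "smooth V"
    and "bdd_below (range \<alpha>)"
    and "a + \<alpha>\<^sub>0 > \<nu>\<^sup>2 / 4"
  shows "c\<^sub>1 > 0 \<and> c\<^sub>2 > 0 \<and>
    (\<forall>x. loewner_le (c\<^sub>1 *\<^sub>R P x) (block2 (mat 1) 0 0 (hessian V x + (1 - \<alpha>\<^sub>0) *\<^sub>R mat 1))
       \<and> loewner_le (block2 (mat 1) 0 0 (hessian V x + (1 - \<alpha>\<^sub>0) *\<^sub>R mat 1)) (c\<^sub>2 *\<^sub>R P x))"
proof -
  have H_lower: "\<alpha>\<^sub>0 * (w \<bullet> w) \<le> w \<bullet> (hessian V x *v w)" for x w
    using hessian_quadratic_form_ge_Inf_min_eigenvalue[OF \<open>smooth V\<close>] \<open>bdd_below (range \<alpha>)\<close>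
    unfolding \<alpha>\<^sub>0_def \<alpha>_def .
  have "4 * (a + \<alpha>\<^sub>0) > \<nu>\<^sup>2"
    using \<open>a + \<alpha>\<^sub>0 > \<nu>\<^sup>2 / 4\<close> by simp
  note constants = loewner_constants[OF this, folded c\<^sub>1_def c\<^sub>2_def]
  show ?thesis
    unfolding P_def
    using constants loewner_le_block2_lower[OF H_lower] loewner_le_block2_upper[OF H_lower] by blast
qed

end
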